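(* Fix $C\neq1$ and fix $\epsilon\in(0,1)$, $\omega>0$ such that $\delta_0=\delta(C)-C\epsilon-\omega>0$ and $\delta_1=\delta(C)-2C\epsilon-\omega>0$. There is an integer $N$ such that: for all $n\ge N$, all $1\le i\ne j\le n$ and all integers $1\le r_1,r_2\le\epsilon n$, \[ \mathbb{P}\big(\{\#\mathcal{E}_i=r_1\}\cap\{\#\mathcal{E}_j=r_2\}\cap\{\mathcal{E}_i\neq\mathcal{E}_j\}\big)\le\frac1C\frac{T_{r_1}e^{-r_1}}{(r_1-1)!}e^{-\delta_1r_1}\cdot\frac1C\frac{T_{r_2}e^{-r_2}}{(r_2-1)!}e^{-\delta_1r_2}; \] and for all $n\ge N$, all $1\le i\ne j\le n$ and all integers $2\le r_1\le\epsilon n$, \[ \mathbb{P}\big(\{\#\mathcal{E}_i=r_1\}\cap\{\mathcal{E}_i=\mathcal{E}_j\}\big)\le2\epsilon\,\frac1C\frac{T_{r_1}e^{-r_1}}{(r_1-1)!}e^{-\delta_0r_1}. \]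
   Context: Let $C>0$ be a constant and $(\alpha_n)_{n\ge1}$ a sequence of nonnegative reals with $\alpha_n\to0$. For each $n$, consider the complete graph $K_n$ on vertex set $\{1,\dots,n\}$; each edge $e$ of $K_n$ is independently open with probability $p_n(e)$ and closed otherwise, where $\frac{C-\alpha_n}{n}\le p_n(e)\le\frac{C+\alpha_n}{n}$ for every edge $e$. Let $G$ be the resulting random graph of open edges, with probability measure $\mathbb{P}$. For a vertex $i$, $\mathcal{E}_i$ denotes the open component of $G$ containing $i$ (the set of vertices joined to $i$ by a path of open edges, together with $i$ itself), and $\#\mathcal{E}_i$ its number of vertices. $\delta(C)=C-1-\log C$. $T_1=1$ and for $r\ge2$, $T_r$ is the number of labelled trees on $r$ vertices. *)

theory Defs
  imports Complex_Main
begin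

definition Kedges :: "nat \<Rightarrow> nat set set" where
  "Kedges n = {{a, b} | a b. a \<in> {1..n} \<and> b \<in> {1..n} \<and> a \<noteq> b}"

definition config_prob :: "nat \<Rightarrow> (nat set \<Rightarrow> real) \<Rightarrow> nat set set \<Rightarrow> real" where
  "config_prob n p G = (\<Prod>e\<in>G. p e) * (\<Prod>e\<in>Kedges n - G. 1 - p e)"

definition Prob :: "nat \<Rightarrow> (nat set \<Rightarrow> real) \<Rightarrow> (nat set set \<Rightarrow> bool) \<Rightarrow> real" where
  "Prob n p P = (\<Sum>G\<in>{G. G \<subseteq> Kedges n \<and> P G}. config_prob n p G)"

definition comp :: "nat set set \<Rightarrow> nat \<Rightarrow> nat set" where
  "comp G i = ({(a, b). {a, b} \<in> G})\<^sup>* `` {i}"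

definition delta :: "real \<Rightarrow> real" where
  "delta C = C - 1 - ln C"

definition connected_on :: "nat \<Rightarrow> nat set set \<Rightarrow> bool" where
  "connected_on r F = (\<forall>a\<in>{1..r}. \<forall>b\<in>{1..r}. (a, b) \<in> ({(x, y). {x, y} \<in> F})\<^sup>*)"

definition is_tree :: "nat \<Rightarrow> nat set set \<Rightarrow> bool" where
  "is_tree r F = (F \<subseteq> Kedges r \<and> connected_on r F \<and>
                  (\<forall>e\<in>F. \<not> connected_on r (F - {e})))"

definition T :: "nat \<Rightarrow> nat" where
  "T r = (if r = 1 then 1 else card {F. is_tree r F})"

end

theory Submission
  imports Defs
begin

text \<open>If the open component of \<open>i\<close> has \<open>r\<close> vertices, then \<open>G\<close> contains a spanning tree of it
  and none of the \<open>r (n - r)\<close> edges leaving it. A union bound over the \<open>(n-1 choose r-1)\<close>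
  candidate vertex sets and their \<open>T\<^sub>r\<close> spanning trees bounds the probability by
  \<open>T\<^sub>r (n-1 choose r-1) ((C+\<alpha>)/n)\<^sup>r\<^sup>-\<^sup>1 exp (-(C-\<alpha>) r (n-r)/n)\<close>. Since
  \<open>(n-1 choose r-1) \<le> n\<^sup>r\<^sup>-\<^sup>1/(r-1)!\<close>, \<open>C\<^sup>r = e\<^sup>r\<^sup>\<cdot>\<^sup>l\<^sup>o\<^sup>g\<^sup>C\<close> and \<open>r \<le> \<epsilon> n\<close>, this is the claimed bound
  once \<open>\<alpha>\<close> is small enough to be absorbed into \<open>\<omega>\<close>. For two distinct components the second one
  is only charged for its edges towards vertices outside both components, which costs a second
  factor \<open>e\<^sup>C\<^sup>\<epsilon>\<^sup>r\<close>; if the component of \<open>i\<close> also contains \<open>j\<close>, the count of vertex sets drops to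
  \<open>(n-2 choose r-2)\<close>, which gains the factor \<open>r/n \<le> \<epsilon>\<close>.\<close>

section \<open>Components and spanning trees\<close>

abbreviation adj :: "nat set set \<Rightarrow> (nat \<times> nat) set" where
  "adj F \<equiv> {(a, b). {a, b} \<in> F}"

definition edges_in :: "nat set \<Rightarrow> nat set set" where
  "edges_in S = {{a, b} | a b. a \<in> S \<and> b \<in> S \<and> a \<noteq> b}"

definition edges_between :: "nat set \<Rightarrow> nat set \<Rightarrow> nat set set" where
  "edges_between S U = {{a, b} | a b. a \<in> S \<and> b \<in> U}"

definition connects :: "nat set \<Rightarrow> nat set set \<Rightarrow> bool" where
  "connects S F \<longleftrightarrow> (\<forall>a\<in>S. \<forall>b\<in>S. (a, b) \<in> (adj F)\<^sup>*)"

definition spanning_trees :: "nat set \<Rightarrow> nat set set set" where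
  "spanning_trees S =
     {F. F \<subseteq> edges_in S \<and> connects S F \<and> (\<forall>e\<in>F. \<not> connects S (F - {e}))}"

lemma Kedges_eq_edges_in: "Kedges n = edges_in {1..n}"
  unfolding Kedges_def edges_in_def by blast

lemma Collect_is_tree: "{F. is_tree r F} = spanning_trees {1..r}"
  unfolding is_tree_def spanning_trees_def connected_on_def connects_def Kedges_eq_edges_in ..

lemma edges_in_subset: "e \<in> edges_in S \<Longrightarrow> e \<subseteq> S"
  unfolding edges_in_def by auto

lemma edges_in_mono: "S \<subseteq> V \<Longrightarrow> edges_in S \<subseteq> edges_in V"
  unfolding edges_in_def by blast

lemma finite_edges_in: "finite S \<Longrightarrow> finite (edges_in S)"
proof -
  have "edges_in S \<subseteq> (\<lambda>(a, b). {a, b}) ` (S \<times> S)"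
    unfolding edges_in_def by auto
  then show "finite S \<Longrightarrow> ?thesis" by (auto intro: finite_subset)
qed

lemma finite_spanning_trees: "finite S \<Longrightarrow> finite (spanning_trees S)"
  unfolding spanning_trees_def
  by (rule finite_subset[of _ "Pow (edges_in S)"]) (auto simp: finite_edges_in)

lemma edges_between_eq_image: "edges_between S U = (\<lambda>(a, b). {a, b}) ` (S \<times> U)"
  unfolding edges_between_def by auto

lemma finite_edges_between: "finite S \<Longrightarrow> finite U \<Longrightarrow> finite (edges_between S U)"
  by (simp add: edges_between_eq_image)

lemma card_edges_between:
  assumes "finite S" "finite U" "S \<inter> U = {}"
  shows "card (edges_between S U) = card S * card U"
proof -
  have "inj_on (\<lambda>(a, b). {a, b}) (S \<times> U)"
    using assms(3) by (auto simp: inj_on_def doubleton_eq_iff)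
  then show ?thesis
    by (simp add: edges_between_eq_image card_image card_cartesian_product)
qed

lemma edges_between_subset_Kedges:
  "S \<subseteq> {1..n} \<Longrightarrow> U \<subseteq> {1..n} \<Longrightarrow> S \<inter> U = {} \<Longrightarrow> edges_between S U \<subseteq> Kedges n"
  unfolding edges_between_def Kedges_def by blast

lemma edges_in_Int_edges_between:
  "W \<inter> S = {} \<or> W \<inter> U = {} \<Longrightarrow> edges_in W \<inter> edges_between S U = {}"
  unfolding edges_in_def edges_between_def by (auto simp: doubleton_eq_iff)

lemma edges_in_disjoint: "S \<inter> U = {} \<Longrightarrow> edges_in S \<inter> edges_in U = {}"
  unfolding edges_in_def by (auto simp: doubleton_eq_iff)

lemma edges_between_disjoint:
  "S \<inter> S' = {} \<Longrightarrow> S \<inter> U' = {} \<Longrightarrow> edges_between S U \<inter> edges_between S' U' = {}"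
  unfolding edges_between_def by (auto simp: doubleton_eq_iff)

lemma edges_in_subset_Kedges: "S \<subseteq> {1..n} \<Longrightarrow> edges_in S \<subseteq> Kedges n"
  unfolding Kedges_eq_edges_in by (rule edges_in_mono)

lemma sym_adj: "sym (adj F)"
  by (auto simp: sym_def insert_commute)

lemma adj_rtrancl_sym: "(a, b) \<in> (adj F)\<^sup>* \<Longrightarrow> (b, a) \<in> (adj F)\<^sup>*"
  by (metis sym_adj sym_rtrancl symD)

lemma self_in_comp: "x \<in> comp F x"
  unfolding comp_def by simp

lemma comp_mono: "F \<subseteq> F' \<Longrightarrow> comp F x \<subseteq> comp F' x"
  unfolding comp_def by (auto elim: rtrancl_mono[THEN subsetD, rotated])

lemma comp_eq_comp: "y \<in> comp F x \<Longrightarrow> comp F y = comp F x"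
  unfolding comp_def by (auto intro: rtrancl_trans adj_rtrancl_sym)

lemma comp_disjoint: "comp F x \<noteq> comp F y \<Longrightarrow> comp F x \<inter> comp F y = {}"
  using comp_eq_comp by blast

lemma connects_iff_comp: "connects S F \<longleftrightarrow> (\<forall>a\<in>S. S \<subseteq> comp F a)"
  unfolding connects_def comp_def by blast

lemma adj_insert_edge: "adj (insert {u, v} F) = insert (u, v) (insert (v, u) (adj F))"
  by (auto simp: doubleton_eq_iff)

lemma comp_insert_edge_outside:
  assumes "u \<notin> comp F x" "v \<notin> comp F x"
  shows "comp (insert {u, v} F) x = comp F x"
  using assms unfolding comp_def adj_insert_edge rtrancl_insert by auto

lemma comp_insert_edge_inside:
  assumes "u \<in> comp F x"
  shows "comp (insert {u, v} F) x = comp F x \<union> comp F v"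
  using assms unfolding comp_def adj_insert_edge rtrancl_insert
  by (auto intro: rtrancl_trans adj_rtrancl_sym)

lemma finite_comp:
  assumes "finite F" "F \<subseteq> edges_in UNIV"
  shows "finite (comp F x)"
proof -
  have "comp F x \<subseteq> insert x (\<Union>F)"
    unfolding comp_def by (auto elim: rtranclE)
  moreover have "finite (\<Union>F)"
    using assms by (auto simp: edges_in_def)
  ultimately show ?thesis
    using finite_subset by blast
qed

text \<open>Every edge added to a graph enlarges the component of \<open>x\<close> by at most the component
  it merges in, so a component has at most one vertex more than it has edges.\<close>
lemma card_comp_le_card_edges:
  assumes "finite F" "F \<subseteq> edges_in UNIV"
  shows "card (comp F x) \<le> card {e\<in>F. e \<subseteq> comp F x} + 1"
  using assms
proof (induction F arbitrary: x rule: finite_induct)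
  case empty
  then show ?case by (simp add: comp_def)
next
  case (insert e F)
  let ?E = "\<lambda>F y. {d\<in>F. d \<subseteq> comp F y}"
  have F: "F \<subseteq> edges_in UNIV" and IH: "\<And>y. card (comp F y) \<le> card (?E F y) + 1"
    using insert by auto
  have fin_E: "finite (?E (insert e F) x)"
    using insert.hyps(1) by simp
  have unchanged: ?case if "comp (insert e F) x = comp F x"
  proof -
    have "card (?E F x) \<le> card (?E (insert e F) x)"
      using that fin_E by (intro card_mono) auto
    then show ?thesis using IH[of x] that by simp
  qed
  obtain u v where e: "e = {u, v}" "u \<noteq> v"
    using insert.prems unfolding edges_in_def by blast
  consider "u \<notin> comp F x" "v \<notin> comp F x"
    | a b where "e = {a, b}" "a \<in> comp F x" "b \<in> comp F x"
    | a b where "e = {a, b}" "a \<in> comp F x" "b \<notin> comp F x"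
    using e(1) by (metis insert_commute)
  then show ?case
  proof cases
    case 1
    then show ?thesis using unchanged comp_insert_edge_outside e(1) by blast
  next
    case (2 a b)
    then show ?thesis using unchanged comp_insert_edge_inside comp_eq_comp by auto
  next
    case (3 a b)
    have new: "comp (insert e F) x = comp F x \<union> comp F b"
      using 3 comp_insert_edge_inside by simp
    have disj: "comp F x \<inter> comp F b = {}"
      using 3 comp_disjoint self_in_comp by metis
    have disj_E: "?E F x \<inter> ?E F b = {}"
      using disj F unfolding edges_in_def by blast
    have "card (comp (insert e F) x) = card (comp F x) + card (comp F b)"
      unfolding new using disj finite_comp[OF insert.hyps(1) F] by (simp add: card_Un_disjoint)
    also have "\<dots> \<le> card (insert e (?E F x \<union> ?E F b)) + 1"
      using IH[of x] IH[of b] disj_E insert.hyps by (simp add: card_Un_disjoint)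
    also have "\<dots> \<le> card (?E (insert e F) x) + 1"
    proof -
      have "insert e (?E F x \<union> ?E F b) \<subseteq> ?E (insert e F) x"
        using 3(1,2) self_in_comp[of b F] unfolding new by auto
      then show ?thesis using fin_E by (simp add: card_mono)
    qed
    finally show ?thesis .
  qed
qed

lemma connects_card_le:
  assumes "finite S" "F \<subseteq> edges_in S" "connects S F"
  shows "card S \<le> card F + 1"
proof (cases "S = {}")
  case False
  then obtain x where x: "x \<in> S" by blast
  have F: "finite F" "F \<subseteq> edges_in UNIV"
    using finite_subset[OF assms(2) finite_edges_in[OF assms(1)]]
      assms(2) edges_in_mono[of S UNIV] by auto
  have "S \<subseteq> comp F x"
    using assms(3) x by (simp add: connects_iff_comp)
  then have "card S \<le> card (comp F x)"
    using finite_comp[OF F] by (rule card_mono[rotated])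
  also have "\<dots> \<le> card {e\<in>F. e \<subseteq> comp F x} + 1"
    using card_comp_le_card_edges[OF F] .
  also have "\<dots> \<le> card F + 1"
    using F by (simp add: card_mono)
  finally show ?thesis .
qed simp

lemma connects_mono: "connects S F \<Longrightarrow> F \<subseteq> F' \<Longrightarrow> connects S F'"
  unfolding connects_iff_comp using comp_mono by blast

lemma spanning_tree_card_le:
  assumes "finite S" "F \<in> spanning_trees S"
  shows "card S \<le> card F + 1"
  using assms connects_card_le unfolding spanning_trees_def by blast

text \<open>A connecting subgraph with as few edges as possible is a spanning tree.\<close>
lemma connects_spanning_tree:
  assumes "finite S" "F \<subseteq> edges_in S" "connects S F"
  obtains T where "T \<in> spanning_trees S" "T \<subseteq> F"
proof -
  obtain T where T: "T \<subseteq> F" "connects S T"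
    and least: "\<And>T'. T' \<subseteq> F \<and> connects S T' \<Longrightarrow> card T \<le> card T'"
    using ex_has_least_nat[of "\<lambda>T. T \<subseteq> F \<and> connects S T" F card] assms(3) by blast
  have "finite T"
    using T(1) assms(1,2) finite_edges_in finite_subset by metis
  have "T \<in> spanning_trees S"
    unfolding spanning_trees_def
  proof (intro CollectI conjI ballI notI)
    show "T \<subseteq> edges_in S" "connects S T"
      using T assms(2) by auto
  next
    fix e
    assume "e \<in> T" "connects S (T - {e})"
    then have "card T \<le> card (T - {e})"
      using least T(1) by blast
    then show False
      using card_Diff1_less[OF \<open>finite T\<close> \<open>e \<in> T\<close>] by simp
  qed
  then show thesis
    using that T(1) by blast
qed

lemma comp_subset:
  assumes "G \<subseteq> edges_in V" "x \<in> V"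
  shows "comp G x \<subseteq> V"
proof
  fix y
  assume "y \<in> comp G x"
  then have "(x, y) \<in> (adj G)\<^sup>*"
    by (simp add: comp_def)
  then show "y \<in> V"
    by induction (use assms edges_in_subset in auto)
qed

lemma comp_no_leaving_edges:
  assumes "U \<inter> comp G x = {}"
  shows "G \<inter> edges_between (comp G x) U = {}"
  using assms unfolding comp_def edges_between_def by (auto intro: rtrancl_into_rtrancl)

lemma comp_connects: "connects (comp G x) (G \<inter> edges_in (comp G x))"
proof -
  let ?H = "G \<inter> edges_in (comp G x)"
  have "(x, y) \<in> (adj ?H)\<^sup>*" if "(x, y) \<in> (adj G)\<^sup>*" for y
    using that
  proof induction
    case (step y z)
    then have "y \<in> comp G x" "z \<in> comp G x"
      by (auto simp: comp_def intro: rtrancl_into_rtrancl)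
    with step show ?case
      by (cases "y = z") (auto simp: edges_in_def intro: rtrancl_into_rtrancl)
  qed simp
  then have sub: "comp G x \<subseteq> comp ?H x"
    by (auto simp: comp_def)
  have "comp ?H a = comp ?H x" if "a \<in> comp G x" for a
    using that sub comp_eq_comp by blast
  then show ?thesis
    unfolding connects_iff_comp using sub by auto
qed

lemma comp_spanning_tree:
  assumes "G \<subseteq> edges_in V" "finite V" "x \<in> V"
  obtains T where "T \<in> spanning_trees (comp G x)" "T \<subseteq> G"
proof -
  have "finite (comp G x)"
    using comp_subset[OF assms(1,3)] assms(2) finite_subset by blast
  then show thesis
    by (rule connects_spanning_tree[OF _ Int_lower2 comp_connects]) (use that in blast)
qed

lemma connects_image:
  assumes "connects S F"
  shows "connects (h ` S) (image h ` F)"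
proof -
  have path: "(h a, h b) \<in> (adj (image h ` F))\<^sup>*" if "(a, b) \<in> (adj F)\<^sup>*" for a b
    using that
  proof induction
    case (step y z)
    then have "image h {y, z} \<in> image h ` F"
      by blast
    then have "(h y, h z) \<in> adj (image h ` F)"
      by simp
    with step.IH show ?case
      by (rule rtrancl_into_rtrancl)
  qed simp
  show ?thesis
    unfolding connects_def
  proof (intro ballI)
    fix a' b'
    assume "a' \<in> h ` S" "b' \<in> h ` S"
    then obtain a b where "a \<in> S" "b \<in> S" "a' = h a" "b' = h b"
      by blast
    then show "(a', b') \<in> (adj (image h ` F))\<^sup>*"
      using path assms unfolding connects_def by blast
  qed
qed

lemma spanning_tree_image:
  assumes h: "bij_betw h S S'" and F: "F \<in> spanning_trees S"
  shows "image h ` F \<in> spanning_trees S'"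
proof -
  define g where "g = inv_into S h"
  have g: "bij_betw g S' S" "\<And>x. x \<in> S \<Longrightarrow> g (h x) = x"
    using h by (auto simp: g_def bij_betw_inv_into bij_betw_inv_into_left)
  have F_edges: "F \<subseteq> edges_in S" and F_conn: "connects S F"
    and F_min: "\<And>e. e \<in> F \<Longrightarrow> \<not> connects S (F - {e})"
    using F unfolding spanning_trees_def by auto
  have g_h_edge: "image g (image h e) = e" if "e \<in> F" for e
    using that F_edges g(2) edges_in_subset by (force simp: image_image)
  have "image h e \<in> edges_in S'" if e: "e \<in> F" for e
  proof -
    obtain a b where "e = {a, b}" "a \<in> S" "b \<in> S" "a \<noteq> b"
      using e F_edges unfolding edges_in_def by blast
    moreover have "h a \<noteq> h b"
      using calculation(2-4) bij_betw_imp_inj_on[OF h] by (auto dest: inj_onD)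
    ultimately show ?thesis
      using bij_betw_apply[OF h] unfolding edges_in_def by auto
  qed
  then have "image h ` F \<subseteq> edges_in S'"
    by blast
  moreover have "connects S' (image h ` F)"
    using connects_image[OF F_conn, of h] bij_betw_imp_surj_on[OF h] by simp
  moreover have "\<not> connects S' (image h ` F - {image h e})" if "e \<in> F" for e
  proof
    assume "connects S' (image h ` F - {image h e})"
    then have "connects S (image g ` (image h ` F - {image h e}))"
      using connects_image[of S' _ g] bij_betw_imp_surj_on[OF g(1)] by simp
    moreover have "image g ` (image h ` F - {image h e}) \<subseteq> F - {e}"
    proof
      fix d
      assume "d \<in> image g ` (image h ` F - {image h e})"
      then obtain f where "f \<in> F" "image h f \<noteq> image h e" "d = image g (image h f)"
        by blast
      then show "d \<in> F - {e}"
        using g_h_edge by auto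
    qed
    ultimately have "connects S (F - {e})"
      by (rule connects_mono)
    with F_min[OF that] show False
      by blast
  qed
  ultimately show ?thesis
    unfolding spanning_trees_def by auto
qed

lemma card_spanning_trees_le:
  assumes "bij_betw h S S'" "finite S'"
  shows "card (spanning_trees S) \<le> card (spanning_trees S')"
proof -
  have "inj_on (image (image h)) (Pow (Pow S))"
    using assms(1) by (intro inj_on_image_Pow) (simp add: bij_betw_def)
  moreover have "spanning_trees S \<subseteq> Pow (Pow S)"
    unfolding spanning_trees_def by (auto dest: edges_in_subset)
  ultimately have "inj_on (image (image h)) (spanning_trees S)"
    by (rule inj_on_subset)
  then show ?thesis
    using spanning_tree_image[OF assms(1)] finite_spanning_trees[OF assms(2)]
    by (intro card_inj_on_le) auto
qed

lemma card_spanning_trees_eq_T: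
  assumes "finite S" "card S = r" "1 \<le> r"
  shows "card (spanning_trees S) = T r"
proof (cases "r = 1")
  case True
  then obtain a where "S = {a}"
    using assms card_1_singletonE by blast
  then have "spanning_trees S = {{}}"
    by (auto simp: spanning_trees_def connects_def edges_in_def)
  then show ?thesis
    using True by (simp add: T_def)
next
  case False
  obtain h where h: "bij_betw h S {1..r}"
    using assms(1,2) finite_same_card_bij[of S "{1..r}"] by auto
  have "card (spanning_trees S) = card (spanning_trees {1..r})"
    using card_spanning_trees_le[OF h] card_spanning_trees_le[OF bij_betw_inv_into[OF h]] assms(1)
    by (simp add: le_antisym)
  then show ?thesis
    using False by (simp add: T_def Collect_is_tree)
qed

section \<open>Counting spanning trees\<close>

lemma card_supersets:
  assumes V: "finite V" and X: "X \<subseteq> V" "card X \<le> r"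
  shows "card {S. S \<subseteq> V \<and> X \<subseteq> S \<and> card S = r} = (card V - card X) choose (r - card X)"
proof -
  have fin: "finite S" if "S \<subseteq> V" for S
    using V that finite_subset by blast
  have "{S. S \<subseteq> V \<and> X \<subseteq> S \<and> card S = r} = (\<lambda>U. U \<union> X) ` {U. U \<subseteq> V - X \<and> card U = r - card X}"
  proof (intro equalityI subsetI)
    fix S
    assume "S \<in> {S. S \<subseteq> V \<and> X \<subseteq> S \<and> card S = r}"
    then have "S = (S - X) \<union> X" "S - X \<subseteq> V - X" "card (S - X) = r - card X"
      using fin X by (auto simp: card_Diff_subset)
    then show "S \<in> (\<lambda>U. U \<union> X) ` {U. U \<subseteq> V - X \<and> card U = r - card X}"
      by blast
  next
    fix S
    assume "S \<in> (\<lambda>U. U \<union> X) ` {U. U \<subseteq> V - X \<and> card U = r - card X}"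
    then obtain U where "S = U \<union> X" "U \<subseteq> V - X" "card U = r - card X"
      by blast
    moreover have "card (U \<union> X) = card U + card X"
      using calculation(2) fin X(1) by (intro card_Un_disjoint) auto
    ultimately show "S \<in> {S. S \<subseteq> V \<and> X \<subseteq> S \<and> card S = r}"
      using X by auto
  qed
  moreover have "inj_on (\<lambda>U. U \<union> X) {U. U \<subseteq> V - X \<and> card U = r - card X}"
    by (rule inj_onI) blast
  ultimately have "card {S. S \<subseteq> V \<and> X \<subseteq> S \<and> card S = r} = card {U. U \<subseteq> V - X \<and> card U = r - card X}"
    by (simp add: card_image)
  also have "\<dots> = (card V - card X) choose (r - card X)"
    using V X(1) fin by (simp add: n_subsets card_Diff_subset)
  finally show ?thesis .
qed

definition trees_through :: "nat \<Rightarrow> nat set \<Rightarrow> nat \<Rightarrow> (nat set \<times> nat set set) set" where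
  "trees_through n X r = (SIGMA S:{S. S \<subseteq> {1..n} \<and> X \<subseteq> S \<and> card S = r}. spanning_trees S)"

lemma finite_trees_through: "finite (trees_through n X r)"
  unfolding trees_through_def
proof (rule finite_SigmaI)
  show "finite {S. S \<subseteq> {1..n} \<and> X \<subseteq> S \<and> card S = r}"
    by (rule finite_subset[of _ "Pow {1..n}"]) auto
  show "finite (spanning_trees S)" if "S \<in> {S. S \<subseteq> {1..n} \<and> X \<subseteq> S \<and> card S = r}" for S
    using that finite_subset[of S "{1..n}"] by (simp add: finite_spanning_trees)
qed

lemma card_trees_through:
  assumes "X \<subseteq> {1..n}" "card X \<le> r" "1 \<le> r"
  shows "card (trees_through n X r) = ((n - card X) choose (r - card X)) * T r"
proof -
  have fin: "finite S" if "S \<subseteq> {1..n}" for S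
    using that finite_subset by blast
  have "card (trees_through n X r)
      = (\<Sum>S\<in>{S. S \<subseteq> {1..n} \<and> X \<subseteq> S \<and> card S = r}. card (spanning_trees S))"
    unfolding trees_through_def using fin finite_spanning_trees by (intro card_SigmaI) auto
  also have "\<dots> = (\<Sum>S\<in>{S. S \<subseteq> {1..n} \<and> X \<subseteq> S \<and> card S = r}. T r)"
    using fin card_spanning_trees_eq_T assms(3) by (intro sum.cong) auto
  also have "\<dots> = ((n - card X) choose (r - card X)) * T r"
    using card_supersets[of "{1..n}" X r] assms(1,2) by simp
  finally show ?thesis .
qed

lemma comp_in_trees_through:
  assumes "G \<subseteq> Kedges n" "i \<in> {1..n}" "X \<subseteq> comp G i" "card (comp G i) = r"
  obtains F where "(comp G i, F) \<in> trees_through n X r" "F \<subseteq> G"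
proof -
  have G: "G \<subseteq> edges_in {1..n}"
    using assms(1) by (simp add: Kedges_eq_edges_in)
  obtain F where "F \<in> spanning_trees (comp G i)" "F \<subseteq> G"
    using comp_spanning_tree[OF G _ assms(2)] by blast
  then show thesis
    using that comp_subset[OF G assms(2)] assms(3,4) by (simp add: trees_through_def)
qed

section \<open>Probabilities of edge configurations\<close>

lemma finite_Kedges: "finite (Kedges n)"
  by (simp add: Kedges_eq_edges_in finite_edges_in)

lemma config_prob_nonneg:
  assumes "\<And>e. e \<in> Kedges n \<Longrightarrow> 0 \<le> p e \<and> p e \<le> 1" "G \<subseteq> Kedges n"
  shows "0 \<le> config_prob n p G"
  unfolding config_prob_def using assms
  by (intro mult_nonneg_nonneg prod_nonneg) (auto simp: subset_iff)

lemma Prob_mono: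
  assumes p: "\<And>e. e \<in> Kedges n \<Longrightarrow> 0 \<le> p e \<and> p e \<le> 1"
    and PQ: "\<And>G. G \<subseteq> Kedges n \<Longrightarrow> P G \<Longrightarrow> Q G"
  shows "Prob n p P \<le> Prob n p Q"
  unfolding Prob_def using PQ config_prob_nonneg[of n p] p finite_Kedges
  by (intro sum_mono2) auto

lemma Prob_union_bound:
  assumes p: "\<And>e. e \<in> Kedges n \<Longrightarrow> 0 \<le> p e \<and> p e \<le> 1"
    and I: "finite I"
    and cover: "\<And>G. G \<subseteq> Kedges n \<Longrightarrow> P G \<Longrightarrow> \<exists>k\<in>I. Q k G"
    and bound: "\<And>k. k \<in> I \<Longrightarrow> Prob n p (Q k) \<le> M"
  shows "Prob n p P \<le> real (card I) * M"
proof -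
  define c where "c = config_prob n p"
  define X where "X k = {G. G \<subseteq> Kedges n \<and> Q k G}" for k
  have c_nonneg: "0 \<le> c G" if "G \<subseteq> Kedges n" for G
    using config_prob_nonneg[of n p G] p that by (simp add: c_def)
  have "Prob n p P = (\<Sum>G\<in>{G. G \<subseteq> Kedges n \<and> P G}. c G)"
    unfolding Prob_def c_def ..
  also have "\<dots> \<le> (\<Sum>G\<in>{G. G \<subseteq> Kedges n \<and> P G}. \<Sum>k\<in>I. if Q k G then c G else 0)"
  proof (rule sum_mono)
    fix G
    assume G: "G \<in> {G. G \<subseteq> Kedges n \<and> P G}"
    then obtain k where k: "k \<in> I" "Q k G"
      using cover by blast
    then have "c G = (if Q k G then c G else 0)"
      by simp
    also have "\<dots> \<le> (\<Sum>k\<in>I. if Q k G then c G else 0)"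
      by (rule member_le_sum) (use k I G c_nonneg in auto)
    finally show "c G \<le> (\<Sum>k\<in>I. if Q k G then c G else 0)" .
  qed
  also have "\<dots> = (\<Sum>k\<in>I. \<Sum>G\<in>{G. G \<subseteq> Kedges n \<and> P G}. if Q k G then c G else 0)"
    by (rule sum.swap)
  also have "\<dots> \<le> (\<Sum>k\<in>I. \<Sum>G\<in>X k. c G)"
  proof (rule sum_mono)
    fix k
    have "(\<Sum>G\<in>{G. G \<subseteq> Kedges n \<and> P G}. if Q k G then c G else 0)
        = (\<Sum>G\<in>{G. G \<subseteq> Kedges n \<and> P G} \<inter> X k. c G)"
      using finite_Kedges by (simp add: sum.inter_restrict X_def)
    also have "\<dots> \<le> (\<Sum>G\<in>X k. c G)"
      using finite_Kedges c_nonneg by (intro sum_mono2) (auto simp: X_def)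
    finally show "(\<Sum>G\<in>{G. G \<subseteq> Kedges n \<and> P G}. if Q k G then c G else 0) \<le> (\<Sum>G\<in>X k. c G)" .
  qed
  also have "\<dots> \<le> (\<Sum>k\<in>I. M)"
    using bound by (intro sum_mono) (simp add: Prob_def X_def c_def)
  finally show ?thesis
    by simp
qed

text \<open>Expanding \<open>\<Prod>e\<in>Kedges n. (f e + g e)\<close>, where \<open>f\<close> vanishes on \<open>B\<close> and \<open>g\<close> on \<open>A\<close>, leaves
  exactly the configurations containing \<open>A\<close> and avoiding \<open>B\<close>.\<close>
lemma Prob_contains_avoids:
  assumes p: "\<And>e. e \<in> Kedges n \<Longrightarrow> 0 \<le> p e \<and> p e \<le> 1"
    and A: "A \<subseteq> Kedges n" and B: "B \<subseteq> Kedges n" and AB: "A \<inter> B = {}"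
  shows "Prob n p (\<lambda>G. A \<subseteq> G \<and> G \<inter> B = {}) = (\<Prod>e\<in>A. p e) * (\<Prod>e\<in>B. 1 - p e)"
proof -
  define K where "K = Kedges n"
  define f where "f e = (if e \<in> B then 0 else p e)" for e
  define g where "g e = (if e \<in> A then 0 else 1 - p e)" for e
  define good where "good = {G. G \<subseteq> K \<and> A \<subseteq> G \<and> G \<inter> B = {}}"
  have K: "finite K"
    by (simp add: K_def finite_Kedges)
  have "(\<Prod>e\<in>K. f e + g e) = (\<Sum>G\<in>Pow K. (\<Prod>e\<in>G. f e) * (\<Prod>e\<in>K - G. g e))"
    by (rule prod_add[OF K])
  also have "\<dots> = (\<Sum>G\<in>good. config_prob n p G)"
  proof (rule sum.mono_neutral_cong_right)
    show "\<forall>G\<in>Pow K - good. (\<Prod>e\<in>G. f e) * (\<Prod>e\<in>K - G. g e) = 0"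
    proof
      fix G
      assume G: "G \<in> Pow K - good"
      then have "(\<exists>e\<in>G. f e = 0) \<or> (\<exists>e\<in>K - G. g e = 0)"
        using A by (auto simp: good_def f_def g_def K_def)
      moreover have "finite G"
        using G K finite_subset by blast
      ultimately show "(\<Prod>e\<in>G. f e) * (\<Prod>e\<in>K - G. g e) = 0"
        using K by (auto simp: prod_zero_iff)
    qed
    show "(\<Prod>e\<in>G. f e) * (\<Prod>e\<in>K - G. g e) = config_prob n p G" if "G \<in> good" for G
      using that by (auto simp: config_prob_def good_def f_def g_def K_def intro!: arg_cong2[where f = "(*)"] prod.cong)
  qed (use K in \<open>auto simp: good_def\<close>)
  also have "\<dots> = Prob n p (\<lambda>G. A \<subseteq> G \<and> G \<inter> B = {})"
    by (simp add: Prob_def good_def K_def)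
  finally have "Prob n p (\<lambda>G. A \<subseteq> G \<and> G \<inter> B = {}) = (\<Prod>e\<in>K. f e + g e)" ..
  also have "\<dots> = (\<Prod>e\<in>K. (if e \<in> A then p e else 1) * (if e \<in> B then 1 - p e else 1))"
    using AB by (intro prod.cong) (auto simp: f_def g_def)
  also have "\<dots> = (\<Prod>e\<in>A. p e) * (\<Prod>e\<in>B. 1 - p e)"
    using A B K by (simp add: prod.distrib prod.If_cases Int_absorb1 Int_absorb2 K_def)
  finally show ?thesis .
qed

locale edge_probabilities =
  fixes n :: nat and p :: "nat set \<Rightarrow> real" and pmin pmax :: real
  assumes p_bounds: "\<And>e. e \<in> Kedges n \<Longrightarrow> pmin \<le> p e \<and> p e \<le> pmax"
    and pmin_nonneg: "0 \<le> pmin" and pmin_le_pmax: "pmin \<le> pmax" and pmax_le_1: "pmax \<le> 1"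
begin

lemma pmax_nonneg: "0 \<le> pmax"
  using pmin_nonneg pmin_le_pmax by linarith

lemma p_range: "e \<in> Kedges n \<Longrightarrow> 0 \<le> p e \<and> p e \<le> 1"
  using p_bounds pmin_nonneg pmax_le_1 by force

lemma prod_le_power_pmax:
  assumes "A \<subseteq> Kedges n" "k \<le> card A"
  shows "(\<Prod>e\<in>A. p e) \<le> pmax ^ k"
proof -
  have "(\<Prod>e\<in>A. p e) \<le> (\<Prod>e\<in>A. pmax)"
    using assms(1) p_bounds p_range by (intro prod_mono) blast
  also have "\<dots> \<le> pmax ^ k"
    using power_decreasing[OF assms(2) pmax_nonneg pmax_le_1] by (simp add: finite_subset)
  finally show ?thesis .
qed

lemma prod_one_minus_le_exp:
  assumes "B \<subseteq> Kedges n"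
  shows "(\<Prod>e\<in>B. 1 - p e) \<le> exp (- pmin * real (card B))"
proof -
  have "(\<Prod>e\<in>B. 1 - p e) \<le> (\<Prod>e\<in>B. exp (- pmin))"
  proof (rule prod_mono)
    fix e
    assume "e \<in> B"
    then show "0 \<le> 1 - p e \<and> 1 - p e \<le> exp (- pmin)"
      using assms p_bounds p_range exp_ge_add_one_self[of "- pmin"] by force
  qed
  then show ?thesis
    by (simp add: exp_of_nat_mult[symmetric] mult.commute)
qed

lemma Prob_contains_avoids_le:
  assumes "A \<subseteq> Kedges n" "B \<subseteq> Kedges n" "A \<inter> B = {}" "k \<le> card A"
  shows "Prob n p (\<lambda>G. A \<subseteq> G \<and> G \<inter> B = {}) \<le> pmax ^ k * exp (- pmin * real (card B))"
proof -
  have "0 \<le> (\<Prod>e\<in>A. p e)" "0 \<le> (\<Prod>e\<in>B. 1 - p e)"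
    using assms(1,2) p_range by (force intro: prod_nonneg)+
  then show ?thesis
    using Prob_contains_avoids[of n p, OF p_range assms(1-3)]
      prod_le_power_pmax[OF assms(1,4)] prod_one_minus_le_exp[OF assms(2)]
    by (auto intro: mult_mono)
qed

lemma Prob_isolated_tree_le:
  assumes S: "S \<subseteq> {1..n}" "card S = r" "F \<in> spanning_trees S"
  shows "Prob n p (\<lambda>G. F \<subseteq> G \<and> G \<inter> edges_between S ({1..n} - S) = {})
    \<le> pmax ^ (r - 1) * exp (- pmin * real (r * (n - r)))"
proof -
  have fin: "finite S"
    using S(1) finite_subset by blast
  have "F \<subseteq> edges_in S"
    using S(3) unfolding spanning_trees_def by blast
  then have "F \<subseteq> Kedges n" "F \<inter> edges_between S ({1..n} - S) = {}"
    using S(1) edges_in_subset_Kedges edges_in_Int_edges_between[of S S "{1..n} - S"] by blast+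
  moreover have "edges_between S ({1..n} - S) \<subseteq> Kedges n"
    using S(1) by (intro edges_between_subset_Kedges) auto
  moreover have "r - 1 \<le> card F"
    using spanning_tree_card_le[OF fin S(3)] S(2) by linarith
  ultimately have "Prob n p (\<lambda>G. F \<subseteq> G \<and> G \<inter> edges_between S ({1..n} - S) = {})
      \<le> pmax ^ (r - 1) * exp (- pmin * real (card (edges_between S ({1..n} - S))))"
    by (intro Prob_contains_avoids_le)
  also have "card (edges_between S ({1..n} - S)) = r * (n - r)"
    using card_edges_between[of S "{1..n} - S"] fin S(1,2) by (simp add: card_Diff_subset Int_Diff)
  finally show ?thesis .
qed

lemma Prob_comp_card_le:
  assumes X: "i \<in> X" "X \<subseteq> {1..n}" "card X \<le> r"
  shows "Prob n p (\<lambda>G. card (comp G i) = r \<and> X \<subseteq> comp G i)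
    \<le> real (T r) * real ((n - card X) choose (r - card X)) * pmax ^ (r - 1)
        * exp (- pmin * real (r * (n - r)))"
proof -
  define Q where "Q = (\<lambda>(S, F) G. F \<subseteq> G \<and> G \<inter> edges_between S ({1..n} - S) = {})"
  have r: "1 \<le> r"
    using X finite_subset[OF X(2)] card_gt_0_iff[of X] by auto
  have "Prob n p (\<lambda>G. card (comp G i) = r \<and> X \<subseteq> comp G i)
      \<le> real (card (trees_through n X r)) * (pmax ^ (r - 1) * exp (- pmin * real (r * (n - r))))"
  proof (rule Prob_union_bound[OF p_range finite_trees_through])
    fix G
    assume G: "G \<subseteq> Kedges n" "card (comp G i) = r \<and> X \<subseteq> comp G i"
    have i: "i \<in> {1..n}"
      using X by blast
    obtain F where F: "(comp G i, F) \<in> trees_through n X r" "F \<subseteq> G"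
      using comp_in_trees_through[OF G(1) i] G(2) by blast
    moreover have "G \<inter> edges_between (comp G i) ({1..n} - comp G i) = {}"
      by (rule comp_no_leaving_edges) blast
    ultimately have "Q (comp G i, F) G"
      by (simp add: Q_def)
    with F(1) show "\<exists>k\<in>trees_through n X r. Q k G"
      by blast
  next
    fix k
    assume "k \<in> trees_through n X r"
    then show "Prob n p (Q k) \<le> pmax ^ (r - 1) * exp (- pmin * real (r * (n - r)))"
      using Prob_isolated_tree_le by (auto simp: Q_def trees_through_def)
  qed
  also have "card (trees_through n X r) = ((n - card X) choose (r - card X)) * T r"
    using card_trees_through X(2,3) r .
  finally show ?thesis
    by (simp add: ac_simps)
qed

lemma Prob_two_isolated_trees_le:
  assumes S1: "S1 \<subseteq> {1..n}" "card S1 = r1" "F1 \<in> spanning_trees S1"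
    and S2: "S2 \<subseteq> {1..n}" "card S2 = r2" "F2 \<in> spanning_trees S2"
    and disj: "S1 \<inter> S2 = {}"
  shows "Prob n p (\<lambda>G. F1 \<union> F2 \<subseteq> G \<and>
      G \<inter> (edges_between S1 ({1..n} - S1) \<union> edges_between S2 ({1..n} - S1 - S2)) = {})
    \<le> pmax ^ (r1 - 1 + (r2 - 1)) * exp (- pmin * real (r1 * (n - r1) + r2 * (n - r1 - r2)))"
proof -
  define B1 where "B1 = edges_between S1 ({1..n} - S1)"
  define B2 where "B2 = edges_between S2 ({1..n} - S1 - S2)"
  have fin: "finite S1" "finite S2"
    using S1(1) S2(1) finite_subset by blast+
  have F: "F1 \<subseteq> edges_in S1" "F2 \<subseteq> edges_in S2"
    using S1(3) S2(3) unfolding spanning_trees_def by blast+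
  have "F1 \<union> F2 \<subseteq> Kedges n"
    using F S1(1) S2(1) edges_in_subset_Kedges by blast
  moreover have "B1 \<union> B2 \<subseteq> Kedges n"
    using S1(1) S2(1) disj unfolding B1_def B2_def
    by (intro Un_least edges_between_subset_Kedges) auto
  moreover have "(F1 \<union> F2) \<inter> (B1 \<union> B2) = {}"
    using F disj edges_in_Int_edges_between[of S1 S1 "{1..n} - S1"]
      edges_in_Int_edges_between[of S2 S1 "{1..n} - S1"]
      edges_in_Int_edges_between[of S1 S2 "{1..n} - S1 - S2"]
      edges_in_Int_edges_between[of S2 S2 "{1..n} - S1 - S2"]
    unfolding B1_def B2_def by blast
  moreover have "r1 - 1 + (r2 - 1) \<le> card (F1 \<union> F2)"
  proof -
    have "F1 \<inter> F2 = {}"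
      using F edges_in_disjoint[OF disj] by blast
    then have "card (F1 \<union> F2) = card F1 + card F2"
      using F fin finite_edges_in finite_subset by (metis card_Un_disjoint)
    then show ?thesis
      using spanning_tree_card_le[OF fin(1) S1(3)] spanning_tree_card_le[OF fin(2) S2(3)] S1(2) S2(2)
      by linarith
  qed
  ultimately have "Prob n p (\<lambda>G. F1 \<union> F2 \<subseteq> G \<and> G \<inter> (B1 \<union> B2) = {})
      \<le> pmax ^ (r1 - 1 + (r2 - 1)) * exp (- pmin * real (card (B1 \<union> B2)))"
    by (rule Prob_contains_avoids_le)
  also have "card (B1 \<union> B2) = r1 * (n - r1) + r2 * (n - r1 - r2)"
  proof -
    have "{1..n} - S1 - S2 = {1..n} - (S1 \<union> S2)"
      by blast
    moreover have "card (S1 \<union> S2) = r1 + r2"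
      using S1(2) S2(2) disj fin by (simp add: card_Un_disjoint)
    ultimately have "card ({1..n} - S1 - S2) = n - r1 - r2"
      using S1(1) S2(1) fin by (simp add: card_Diff_subset)
    then have "card B1 = r1 * (n - r1)" "card B2 = r2 * (n - r1 - r2)"
      using S1 S2(2) fin by (simp_all add: B1_def B2_def card_edges_between card_Diff_subset Int_Diff)
    moreover have "B1 \<inter> B2 = {}"
      unfolding B1_def B2_def using disj by (intro edges_between_disjoint) auto
    ultimately show ?thesis
      using fin by (simp add: B1_def B2_def card_Un_disjoint finite_edges_between)
  qed
  finally show ?thesis
    unfolding B1_def B2_def .
qed

lemma Prob_two_comps_le:
  assumes i: "i \<in> {1..n}" and j: "j \<in> {1..n}" and r: "1 \<le> r1" "1 \<le> r2"
  shows "Prob n p (\<lambda>G. card (comp G i) = r1 \<and> card (comp G j) = r2 \<and> comp G i \<noteq> comp G j)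
    \<le> (real (T r1) * real ((n - 1) choose (r1 - 1)) * pmax ^ (r1 - 1)
          * exp (- pmin * real (r1 * (n - r1))))
      * (real (T r2) * real ((n - 1) choose (r2 - 1)) * pmax ^ (r2 - 1)
          * exp (- pmin * real (r2 * (n - r1 - r2))))"
proof -
  define I where "I = {((S1, F1), (S2, F2)) \<in> trees_through n {i} r1 \<times> trees_through n {j} r2.
    S1 \<inter> S2 = {}}"
  define Q where "Q = (\<lambda>((S1, F1), (S2, F2)) G. F1 \<union> F2 \<subseteq> G \<and>
    G \<inter> (edges_between S1 ({1..n} - S1) \<union> edges_between S2 ({1..n} - S1 - S2)) = {})"
  have I_sub: "I \<subseteq> trees_through n {i} r1 \<times> trees_through n {j} r2"
    unfolding I_def by auto
  then have I: "finite I" "card I \<le> card (trees_through n {i} r1) * card (trees_through n {j} r2)"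
    using finite_subset[OF I_sub] card_mono[OF _ I_sub] finite_trees_through
    by (simp_all add: card_cartesian_product)
  have "Prob n p (\<lambda>G. card (comp G i) = r1 \<and> card (comp G j) = r2 \<and> comp G i \<noteq> comp G j)
      \<le> real (card I) * (pmax ^ (r1 - 1 + (r2 - 1))
          * exp (- pmin * real (r1 * (n - r1) + r2 * (n - r1 - r2))))"
  proof (rule Prob_union_bound[OF p_range I(1)])
    fix G
    assume G: "G \<subseteq> Kedges n" "card (comp G i) = r1 \<and> card (comp G j) = r2 \<and> comp G i \<noteq> comp G j"
    have roots: "{i} \<subseteq> comp G i" "{j} \<subseteq> comp G j"
      using self_in_comp by auto
    obtain F1 where F1: "(comp G i, F1) \<in> trees_through n {i} r1" "F1 \<subseteq> G"
      using comp_in_trees_through[OF G(1) i roots(1)] G(2) by blast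
    obtain F2 where F2: "(comp G j, F2) \<in> trees_through n {j} r2" "F2 \<subseteq> G"
      using comp_in_trees_through[OF G(1) j roots(2)] G(2) by blast
    have "((comp G i, F1), (comp G j, F2)) \<in> I"
      using F1(1) F2(1) G(2) comp_disjoint unfolding I_def by blast
    moreover have "Q ((comp G i, F1), (comp G j, F2)) G"
      using F1(2) F2(2) comp_no_leaving_edges[of "{1..n} - comp G i" G i]
        comp_no_leaving_edges[of "{1..n} - comp G i - comp G j" G j]
      unfolding Q_def by auto
    ultimately show "\<exists>k\<in>I. Q k G"
      by blast
  next
    fix k
    assume "k \<in> I"
    then show "Prob n p (Q k) \<le> pmax ^ (r1 - 1 + (r2 - 1))
        * exp (- pmin * real (r1 * (n - r1) + r2 * (n - r1 - r2)))"
      using Prob_two_isolated_trees_le by (auto simp: I_def Q_def trees_through_def)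
  qed
  also have "\<dots> \<le> real ((((n - 1) choose (r1 - 1)) * T r1) * (((n - 1) choose (r2 - 1)) * T r2))
      * (pmax ^ (r1 - 1 + (r2 - 1)) * exp (- pmin * real (r1 * (n - r1) + r2 * (n - r1 - r2))))"
  proof (rule mult_right_mono)
    have "card I \<le> (((n - 1) choose (r1 - 1)) * T r1) * (((n - 1) choose (r2 - 1)) * T r2)"
      using I(2) card_trees_through[of "{i}" n r1] card_trees_through[of "{j}" n r2] i j r by simp
    then show "real (card I) \<le> real ((((n - 1) choose (r1 - 1)) * T r1) * (((n - 1) choose (r2 - 1)) * T r2))"
      by (simp only: of_nat_le_iff)
  qed (use pmax_nonneg in simp)
  finally show ?thesis
    by (simp add: power_add mult_exp_exp distrib_left ac_simps)
qed

end

section \<open>The cluster estimates\<close>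

lemma binomial_power_le:
  fixes h :: real
  assumes k: "1 \<le> k" "k \<le> r" and h: "0 \<le> h" and n: "0 < n"
  shows "real ((n - k) choose (r - k)) * (h / real n) ^ (r - 1)
    \<le> (real r / real n) ^ (k - 1) * h ^ (r - 1) / fact (r - 1)"
proof -
  define A where "A = real ((n - k) choose (r - k))"
  have A: "A * fact (r - k) \<le> real n ^ (r - k)"
  proof -
    have "((n - k) choose (r - k)) * fact (r - k) \<le> (n - k) ^ (r - k)"
      by (rule binomial_fact_pow)
    also have "\<dots> \<le> n ^ (r - k)"
      by (simp add: power_mono)
    finally have "real (((n - k) choose (r - k)) * fact (r - k)) \<le> real (n ^ (r - k))"
      by (simp only: of_nat_le_iff)
    then show ?thesis
      by (simp add: A_def)
  qed
  have fact: "fact (r - 1) \<le> fact (r - k) * real r ^ (k - 1)"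
  proof -
    have "fact (r - 1) div fact (r - k) \<le> (r - 1) ^ (k - 1)"
      using fact_div_fact_le_pow[of "k - 1" "r - 1"] k by (simp add: diff_diff_right)
    also have "\<dots> \<le> r ^ (k - 1)"
      by (simp add: power_mono)
    finally have div_le: "fact (r - 1) div fact (r - k) \<le> r ^ (k - 1)" .
    have "(fact (r - 1) :: nat) = fact (r - k) * (fact (r - 1) div fact (r - k))"
      using k by (simp add: dvd_mult_div_cancel fact_dvd)
    also have "\<dots> \<le> fact (r - k) * r ^ (k - 1)"
      using div_le by (rule mult_le_mono2)
    finally have "real (fact (r - 1)) \<le> real (fact (r - k) * r ^ (k - 1))"
      by (simp only: of_nat_le_iff)
    then show ?thesis
      by simp
  qed
  have split_power: "real n ^ (r - 1) = real n ^ (r - k) * real n ^ (k - 1)"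
    using k by (simp flip: power_add)
  have "A * fact (r - 1) * real n ^ (k - 1) \<le> A * (fact (r - k) * real r ^ (k - 1)) * real n ^ (k - 1)"
    using fact by (intro mult_right_mono mult_left_mono) (auto simp: A_def)
  also have "\<dots> = (A * fact (r - k)) * (real r ^ (k - 1) * real n ^ (k - 1))"
    by (simp only: ac_simps)
  also have "\<dots> \<le> real n ^ (r - k) * (real r ^ (k - 1) * real n ^ (k - 1))"
    using A by (intro mult_right_mono) auto
  also have "\<dots> = real r ^ (k - 1) * real n ^ (r - 1)"
    unfolding split_power by (simp only: ac_simps)
  finally have "A * fact (r - 1) * real n ^ (k - 1) \<le> real r ^ (k - 1) * real n ^ (r - 1)" .
  then have "A * fact (r - 1) * real n ^ (k - 1) * h ^ (r - 1) \<le> real r ^ (k - 1) * real n ^ (r - 1) * h ^ (r - 1)"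
    using h by (simp add: mult_right_mono)
  then show ?thesis
    using n by (simp add: A_def field_simps power_divide)
qed

lemma power_exp_le:
  fixes C a \<omega> t y :: real and r :: nat
  assumes C: "0 < C" and a: "0 \<le> a" "a \<le> C" "a / C + a \<le> \<omega>" and t: "0 \<le> t"
    and y: "(1 - t) * real r \<le> y" and r: "1 \<le> r"
  shows "(C + a) ^ (r - 1) * exp (- (C - a) * y)
    \<le> 1 / C * exp (- real r) * exp (- (delta C - C * t - \<omega>) * real r)"
proof -
  have "(C + a) ^ (r - 1) = C ^ (r - 1) * (1 + a / C) ^ (r - 1)"
    using C by (simp add: power_mult_distrib[symmetric] field_simps)
  also have "\<dots> \<le> C ^ (r - 1) * exp (a / C * real r)"
  proof (rule mult_left_mono)
    have "(1 + a / C) ^ (r - 1) \<le> exp (a / C) ^ (r - 1)"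
      using C a by (intro power_mono) (auto simp: exp_ge_add_one_self)
    also have "\<dots> = exp (a / C * real (r - 1))"
      by (simp add: exp_of_nat_mult[symmetric] mult.commute)
    also have "\<dots> \<le> exp (a / C * real r)"
      using C a by (intro exp_mono mult_left_mono) auto
    finally show "(1 + a / C) ^ (r - 1) \<le> exp (a / C * real r)" .
  qed (use C in simp)
  also have "C ^ (r - 1) = exp (ln C * real r) / C"
  proof -
    have "exp (ln C * real r) = C ^ r"
      using C by (simp add: mult.commute exp_of_nat_mult)
    then show ?thesis
      using C r by (simp add: power_diff)
  qed
  finally have power: "(C + a) ^ (r - 1) \<le> exp (ln C * real r) / C * exp (a / C * real r)" .
  have "(C - a) * ((1 - t) * real r) \<le> (C - a) * y"
    using a y by (intro mult_left_mono) auto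
  moreover have "a * t * real r \<ge> 0"
    using a t by simp
  ultimately have "- (C - a) * y \<le> (C * t - C + a) * real r"
    by (simp add: algebra_simps)
  then have "exp (- (C - a) * y) \<le> exp ((C * t - C + a) * real r)"
    by simp
  with power have "(C + a) ^ (r - 1) * exp (- (C - a) * y)
      \<le> exp (ln C * real r) / C * exp (a / C * real r) * exp ((C * t - C + a) * real r)"
    using C by (intro mult_mono) auto
  also have "\<dots> = 1 / C * exp ((ln C + a / C + a + C * t - C) * real r)"
    by (simp add: mult_exp_exp algebra_simps)
  also have "\<dots> \<le> 1 / C * exp ((ln C + \<omega> + C * t - C) * real r)"
    using C a(3) by (intro mult_left_mono exp_mono mult_right_mono) auto
  also have "\<dots> = 1 / C * exp (- real r) * exp (- (delta C - C * t - \<omega>) * real r)"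
    by (simp add: delta_def mult_exp_exp algebra_simps)
  finally show ?thesis .
qed

definition cluster_bound :: "real \<Rightarrow> real \<Rightarrow> nat \<Rightarrow> real" where
  "cluster_bound C d r = 1 / C * (real (T r) * exp (- real r) / fact (r - 1)) * exp (- d * real r)"

lemma cluster_bound_nonneg: "0 < C \<Longrightarrow> 0 \<le> cluster_bound C d r"
  by (simp add: cluster_bound_def)

lemma cluster_factor_le:
  fixes C a \<omega> t :: real and n m r k :: nat
  assumes C: "0 < C" and a: "0 \<le> a" "a \<le> C" "a / C + a \<le> \<omega>" and t: "0 \<le> t"
    and k: "1 \<le> k" "k \<le> r" and n: "0 < n" and m: "(1 - t) * (real r * real n) \<le> real m"
  shows "real (T r) * real ((n - k) choose (r - k)) * ((C + a) / real n) ^ (r - 1)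
      * exp (- ((C - a) / real n) * real m)
    \<le> (real r / real n) ^ (k - 1) * cluster_bound C (delta C - C * t - \<omega>) r"
proof -
  have y: "(1 - t) * real r \<le> real m / real n"
    using m n by (simp add: field_simps)
  have "real (T r) * real ((n - k) choose (r - k)) * ((C + a) / real n) ^ (r - 1)
      * exp (- ((C - a) / real n) * real m)
    = real (T r) * (real ((n - k) choose (r - k)) * ((C + a) / real n) ^ (r - 1))
      * exp (- (C - a) * (real m / real n))"
    by (simp only: ac_simps times_divide_eq_left times_divide_eq_right mult_minus_left minus_divide_left)
  also have "\<dots> \<le> real (T r) * ((real r / real n) ^ (k - 1) * (C + a) ^ (r - 1) / fact (r - 1))
      * exp (- (C - a) * (real m / real n))"
    using binomial_power_le[OF k, of "C + a" n] C a n by (intro mult_right_mono mult_left_mono) auto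
  also have "\<dots> = (real r / real n) ^ (k - 1) * (real (T r) / fact (r - 1))
      * ((C + a) ^ (r - 1) * exp (- (C - a) * (real m / real n)))"
    by (simp add: field_simps)
  also have "\<dots> \<le> (real r / real n) ^ (k - 1) * (real (T r) / fact (r - 1))
      * (1 / C * exp (- real r) * exp (- (delta C - C * t - \<omega>) * real r))"
    using power_exp_le[OF C a t y] k by (intro mult_left_mono) auto
  also have "\<dots> = (real r / real n) ^ (k - 1) * cluster_bound C (delta C - C * t - \<omega>) r"
    by (simp add: cluster_bound_def ac_simps)
  finally show ?thesis .
qed

lemma card_outside_ge:
  fixes t :: real
  assumes "real s + real r \<le> t * real n"
  shows "(1 - t) * (real r * real n) \<le> real (r * (n - s - r))"
proof -
  have "real r * (real n - (real s + real r)) \<le> real r * real (n - s - r)"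
    by (intro mult_left_mono) (auto simp: of_nat_diff)
  moreover have "real r * (real n - t * real n) \<le> real r * (real n - (real s + real r))"
    using assms by (intro mult_left_mono) auto
  ultimately have "(1 - t) * (real r * real n) \<le> real r * real (n - s - r)"
    by (simp add: algebra_simps)
  then show ?thesis
    by simp
qed

lemma edge_probabilities_perturbed:
  assumes "a \<le> C" "0 \<le> a" "C + a \<le> real n"
    and "\<And>e. e \<in> Kedges n \<Longrightarrow> (C - a) / real n \<le> p e \<and> p e \<le> (C + a) / real n"
  shows "edge_probabilities n p ((C - a) / real n) ((C + a) / real n)"
  using assms by unfold_locales (auto simp: divide_right_mono divide_le_eq_1)

lemma Prob_distinct_comps_le:
  fixes C a \<omega> eps :: real
  assumes C: "0 < C" and a: "0 \<le> a" "a \<le> C" "a / C + a \<le> \<omega>" "C + a \<le> real n"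
    and p: "\<And>e. e \<in> Kedges n \<Longrightarrow> (C - a) / real n \<le> p e \<and> p e \<le> (C + a) / real n"
    and eps: "0 \<le> eps" and i: "i \<in> {1..n}" and j: "j \<in> {1..n}"
    and r1: "1 \<le> r1" "real r1 \<le> eps * real n" and r2: "1 \<le> r2" "real r2 \<le> eps * real n"
  shows "Prob n p (\<lambda>G. card (comp G i) = r1 \<and> card (comp G j) = r2 \<and> comp G i \<noteq> comp G j)
    \<le> cluster_bound C (delta C - 2 * C * eps - \<omega>) r1 * cluster_bound C (delta C - 2 * C * eps - \<omega>) r2"
proof -
  have ep: "edge_probabilities n p ((C - a) / real n) ((C + a) / real n)"
    using edge_probabilities_perturbed a(2,1,4) p .
  have n: "0 < n" and t: "0 \<le> 2 * eps"
    using i eps by auto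
  have d: "delta C - 2 * C * eps - \<omega> = delta C - C * (2 * eps) - \<omega>"
    by simp
  have f1: "real (T r1) * real ((n - 1) choose (r1 - 1)) * ((C + a) / real n) ^ (r1 - 1)
      * exp (- ((C - a) / real n) * real (r1 * (n - r1)))
    \<le> (real r1 / real n) ^ (1 - 1) * cluster_bound C (delta C - C * (2 * eps) - \<omega>) r1"
    using card_outside_ge[of 0 r1 "2 * eps" n] r1 eps
    by (intro cluster_factor_le[OF C a(1-3) t order_refl r1(1) n]) auto
  have f2: "real (T r2) * real ((n - 1) choose (r2 - 1)) * ((C + a) / real n) ^ (r2 - 1)
      * exp (- ((C - a) / real n) * real (r2 * (n - r1 - r2)))
    \<le> (real r2 / real n) ^ (1 - 1) * cluster_bound C (delta C - C * (2 * eps) - \<omega>) r2"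
    using card_outside_ge[of r1 r2 "2 * eps" n] r1 r2
    by (intro cluster_factor_le[OF C a(1-3) t order_refl r2(1) n]) auto
  have "Prob n p (\<lambda>G. card (comp G i) = r1 \<and> card (comp G j) = r2 \<and> comp G i \<noteq> comp G j)
    \<le> (real (T r1) * real ((n - 1) choose (r1 - 1)) * ((C + a) / real n) ^ (r1 - 1)
          * exp (- ((C - a) / real n) * real (r1 * (n - r1))))
      * (real (T r2) * real ((n - 1) choose (r2 - 1)) * ((C + a) / real n) ^ (r2 - 1)
          * exp (- ((C - a) / real n) * real (r2 * (n - r1 - r2))))"
    by (rule edge_probabilities.Prob_two_comps_le[OF ep i j r1(1) r2(1)])
  also have "\<dots> \<le> cluster_bound C (delta C - C * (2 * eps) - \<omega>) r1
      * cluster_bound C (delta C - C * (2 * eps) - \<omega>) r2"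
    using f1 f2 C a by (intro mult_mono) (simp_all add: cluster_bound_nonneg)
  finally show ?thesis
    unfolding d .
qed

lemma Prob_same_comp_le:
  fixes C a \<omega> eps :: real
  assumes C: "0 < C" and a: "0 \<le> a" "a \<le> C" "a / C + a \<le> \<omega>" "C + a \<le> real n"
    and p: "\<And>e. e \<in> Kedges n \<Longrightarrow> (C - a) / real n \<le> p e \<and> p e \<le> (C + a) / real n"
    and eps: "0 \<le> eps" and i: "i \<in> {1..n}" and j: "j \<in> {1..n}" and ij: "i \<noteq> j"
    and r: "2 \<le> r" "real r \<le> eps * real n"
  shows "Prob n p (\<lambda>G. card (comp G i) = r \<and> comp G i = comp G j)
    \<le> eps * cluster_bound C (delta C - C * eps - \<omega>) r"
proof -
  have ep: "edge_probabilities n p ((C - a) / real n) ((C + a) / real n)"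
    using edge_probabilities_perturbed a(2,1,4) p .
  have n: "0 < n"
    using i by auto
  have card_ij: "card {i, j} = 2"
    using ij by simp
  have "Prob n p (\<lambda>G. card (comp G i) = r \<and> comp G i = comp G j)
      \<le> Prob n p (\<lambda>G. card (comp G i) = r \<and> {i, j} \<subseteq> comp G i)"
    using self_in_comp[of i] self_in_comp[of j] by (intro Prob_mono[OF edge_probabilities.p_range[OF ep]]) auto
  also have "\<dots> \<le> real (T r) * real ((n - 2) choose (r - 2)) * ((C + a) / real n) ^ (r - 1)
      * exp (- ((C - a) / real n) * real (r * (n - r)))"
    by (rule edge_probabilities.Prob_comp_card_le[OF ep, of i "{i, j}" r, unfolded card_ij])
      (use i j r in auto)
  also have "\<dots> \<le> (real r / real n) ^ (2 - 1) * cluster_bound C (delta C - C * eps - \<omega>) r"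
  proof (rule cluster_factor_le[OF C a(1-3) eps _ r(1) n])
    show "(1 - eps) * (real r * real n) \<le> real (r * (n - r))"
      using card_outside_ge[of 0 r eps n] r by simp
  qed simp
  also have "\<dots> \<le> eps * cluster_bound C (delta C - C * eps - \<omega>) r"
    using r n C by (intro mult_right_mono cluster_bound_nonneg) (simp_all add: field_simps)
  finally show ?thesis .
qed

lemma eventually_perturbation_small:
  fixes \<alpha> :: "nat \<Rightarrow> real"
  assumes \<alpha>: "\<alpha> \<longlonglongrightarrow> 0" and C: "0 < C" and \<omega>: "0 < \<omega>"
  shows "\<forall>\<^sub>F n in sequentially. \<alpha> n \<le> C \<and> \<alpha> n / C + \<alpha> n \<le> \<omega> \<and> C + \<alpha> n \<le> real n"
proof -
  have "(\<lambda>n. \<alpha> n / C + \<alpha> n) \<longlonglongrightarrow> 0"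
    using tendsto_add[OF tendsto_divide[OF \<alpha> tendsto_const] \<alpha>] C by simp
  then have small: "\<forall>\<^sub>F n in sequentially. \<alpha> n / C + \<alpha> n < \<omega>"
    using \<omega> by (rule order_tendstoD)
  obtain N :: nat where N: "2 * C \<le> real N"
    using real_arch_simple by blast
  have large: "\<forall>\<^sub>F n in sequentially. 2 * C \<le> real n"
    using eventually_ge_at_top[of N] by eventually_elim (use N in simp)
  show ?thesis
    using order_tendstoD(2)[OF \<alpha> C] small large by eventually_elim auto
qed

theorem lemma2:
  fixes C eps \<omega> :: real
    and \<alpha> :: "nat \<Rightarrow> real"
    and p :: "nat \<Rightarrow> nat set \<Rightarrow> real"
  assumes C_pos: "C > 0" and C_ne1: "C \<noteq> 1"
    and alpha_nonneg: "\<And>n. \<alpha> n \<ge> 0"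
    and alpha_lim: "\<alpha> \<longlonglongrightarrow> 0"
    and p_prob: "\<And>n e. e \<in> Kedges n \<Longrightarrow> 0 \<le> p n e \<and> p n e \<le> 1"
    and p_bounds: "\<And>n e. e \<in> Kedges n \<Longrightarrow>
                      (C - \<alpha> n) / real n \<le> p n e \<and> p n e \<le> (C + \<alpha> n) / real n"
    and eps: "0 < eps" "eps < 1" and om: "\<omega> > 0"
    and d0: "delta C - C * eps - \<omega> > 0"
    and d1: "delta C - 2 * C * eps - \<omega> > 0"
  shows "\<exists>N::nat.
     (\<forall>n\<ge>N. \<forall>i\<in>{1..n}. \<forall>j\<in>{1..n}. \<forall>r1 r2::nat. i \<noteq> j \<longrightarrow>
        1 \<le> r1 \<longrightarrow> real r1 \<le> eps * real n \<longrightarrow> 1 \<le> r2 \<longrightarrow> real r2 \<le> eps * real n \<longrightarrow>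
        Prob n (p n) (\<lambda>G. card (comp G i) = r1 \<and> card (comp G j) = r2 \<and> comp G i \<noteq> comp G j)
        \<le> (1 / C) * (real (T r1) * exp (- real r1) / fact (r1 - 1))
              * exp (- (delta C - 2 * C * eps - \<omega>) * real r1)
          * ((1 / C) * (real (T r2) * exp (- real r2) / fact (r2 - 1))
              * exp (- (delta C - 2 * C * eps - \<omega>) * real r2))) \<and>
     (\<forall>n\<ge>N. \<forall>i\<in>{1..n}. \<forall>j\<in>{1..n}. \<forall>r1::nat. i \<noteq> j \<longrightarrow>
        2 \<le> r1 \<longrightarrow> real r1 \<le> eps * real n \<longrightarrow>
        Prob n (p n) (\<lambda>G. card (comp G i) = r1 \<and> comp G i = comp G j)
        \<le> 2 * eps * ((1 / C) * (real (T r1) * exp (- real r1) / fact (r1 - 1))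
              * exp (- (delta C - C * eps - \<omega>) * real r1)))"
proof -
  obtain N where N: "\<And>n. N \<le> n \<Longrightarrow> \<alpha> n \<le> C \<and> \<alpha> n / C + \<alpha> n \<le> \<omega> \<and> C + \<alpha> n \<le> real n"
    using eventually_perturbation_small[OF alpha_lim C_pos om] by (auto simp: eventually_sequentially)
  have double: "eps * cluster_bound C d r \<le> 2 * eps * cluster_bound C d r" for d r
    using eps C_pos cluster_bound_nonneg[of C d r] by (simp add: mult_right_mono)
  show ?thesis
  proof (intro exI[of _ N] conjI allI impI ballI)
    fix n i j r1 r2 :: nat
    assume n: "N \<le> n" and "i \<in> {1..n}" "j \<in> {1..n}" "i \<noteq> j" "1 \<le> r1" "real r1 \<le> eps * real n"
      "1 \<le> r2" "real r2 \<le> eps * real n"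
    then show "Prob n (p n) (\<lambda>G. card (comp G i) = r1 \<and> card (comp G j) = r2 \<and> comp G i \<noteq> comp G j)
        \<le> (1 / C) * (real (T r1) * exp (- real r1) / fact (r1 - 1))
              * exp (- (delta C - 2 * C * eps - \<omega>) * real r1)
          * ((1 / C) * (real (T r2) * exp (- real r2) / fact (r2 - 1))
              * exp (- (delta C - 2 * C * eps - \<omega>) * real r2))"
      using N[OF n] C_pos alpha_nonneg p_bounds eps
      by (intro Prob_distinct_comps_le[of C "\<alpha> n", unfolded cluster_bound_def]) auto
  next
    fix n i j r :: nat
    assume n: "N \<le> n" and "i \<in> {1..n}" "j \<in> {1..n}" "i \<noteq> j" "2 \<le> r" "real r \<le> eps * real n"
    then show "Prob n (p n) (\<lambda>G. card (comp G i) = r \<and> comp G i = comp G j)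
        \<le> 2 * eps * ((1 / C) * (real (T r) * exp (- real r) / fact (r - 1))
              * exp (- (delta C - C * eps - \<omega>) * real r))"
      using N[OF n] C_pos alpha_nonneg p_bounds eps
      by (intro order_trans[OF Prob_same_comp_le[of C "\<alpha> n", unfolded cluster_bound_def]
            double[unfolded cluster_bound_def]]) auto
  qed
qed

end
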